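(* Let $(B,M,A,\rho,e,r,c)$ be a $\mathbf{k}$-bimodule with factorization structure. Then the map $\Delta:\mathbf{k}\oplus(B,\cdot_e)\to A$ defined by $\Delta(\lambda,b)=\lambda 1_A+r\big(\rho(b)(c(1_A))\big)$ is a morphism of unital $\mathbf{k}$-algebras.
   Context: $\mathbf{k}$ is a commutative $\mathbb{Q}$-algebra. A $\mathbf{k}$-bimodule is $(B,M,A,\rho)$ with $A,B$ unital $\mathbf{k}$-algebras, $M$ a right $A$-module and $\rho:B\to\mathrm{End}_A(M)$ an algebra morphism; a factorization structure is $(e,r,c)$ with $e\in B$, $r:M\to A$, $c:A\to M$ right $A$-module morphisms and $\rho(e)=c\circ r$. For $e\in B$, $\mathbf{k}\oplus(B,\cdot_e)$ is the unital algebra on $\mathbf{k}\oplus B$ with product $(\lambda,b)(\lambda',b')=(\lambda\lambda',\lambda b'+\lambda'b+beb')$ and unit $(1,0)$. *)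

theory Defs
  imports Main
begin

definition Q_algebra_ring :: "'k::comm_ring_1 itself \<Rightarrow> bool" where
  "Q_algebra_ring _ \<longleftrightarrow> (\<forall>n::nat. n > 0 \<longrightarrow> (\<exists>u::'k. of_nat n * u = 1))"

definition k_algebra :: "('k::comm_ring_1 \<Rightarrow> 'a::ring_1 \<Rightarrow> 'a) \<Rightarrow> bool" where
  "k_algebra smul \<longleftrightarrow>
     (\<forall>l a b. smul l (a + b) = smul l a + smul l b) \<and>
     (\<forall>l m a. smul (l + m) a = smul l a + smul m a) \<and>
     (\<forall>l m a. smul (l * m) a = smul l (smul m a)) \<and>
     (\<forall>a. smul 1 a = a) \<and>
     (\<forall>l a b. smul l (a * b) = smul l a * b) \<and>
     (\<forall>l a b. smul l (a * b) = a * smul l b)"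

definition right_module :: "('m::ab_group_add \<Rightarrow> 'a::ring_1 \<Rightarrow> 'm) \<Rightarrow> bool" where
  "right_module act \<longleftrightarrow>
     (\<forall>m n a. act (m + n) a = act m a + act n a) \<and>
     (\<forall>m a b. act m (a + b) = act m a + act m b) \<and>
     (\<forall>m a b. act m (a * b) = act (act m a) b) \<and>
     (\<forall>m. act m 1 = m)"

definition rmod_hom ::
  "('m::ab_group_add \<Rightarrow> 'a::ring_1 \<Rightarrow> 'm) \<Rightarrow> ('n::ab_group_add \<Rightarrow> 'a \<Rightarrow> 'n) \<Rightarrow> ('m \<Rightarrow> 'n) \<Rightarrow> bool" where
  "rmod_hom actM actN f \<longleftrightarrow>
     (\<forall>m n. f (m + n) = f m + f n) \<and> (\<forall>m a. f (actM m a) = actN (f m) a)"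

text \<open>rho : B \<rightarrow> End_A(M) is a morphism of unital k-algebras; the k-action on
  End_A(M) is (l f)(m) = f(m) . (l 1_A).\<close>
definition endo_alg_hom ::
  "('k::comm_ring_1 \<Rightarrow> 'a::ring_1 \<Rightarrow> 'a) \<Rightarrow> ('k \<Rightarrow> 'b::ring_1 \<Rightarrow> 'b) \<Rightarrow>
   ('m::ab_group_add \<Rightarrow> 'a \<Rightarrow> 'm) \<Rightarrow> ('b \<Rightarrow> 'm \<Rightarrow> 'm) \<Rightarrow> bool" where
  "endo_alg_hom smulA smulB act rho \<longleftrightarrow>
     (\<forall>b. rmod_hom act act (rho b)) \<and>
     (\<forall>b b' m. rho (b + b') m = rho b m + rho b' m) \<and>
     (\<forall>l b m. rho (smulB l b) m = act (rho b m) (smulA l 1)) \<and>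
     (\<forall>b b'. rho (b * b') = rho b \<circ> rho b') \<and>
     rho 1 = id"

definition kB_add :: "('k::comm_ring_1 \<times> 'b::ring_1) \<Rightarrow> ('k \<times> 'b) \<Rightarrow> ('k \<times> 'b)" where
  "kB_add x y = (fst x + fst y, snd x + snd y)"

definition kB_smul :: "('k::comm_ring_1 \<Rightarrow> 'b::ring_1 \<Rightarrow> 'b) \<Rightarrow> 'k \<Rightarrow> ('k \<times> 'b) \<Rightarrow> ('k \<times> 'b)" where
  "kB_smul smulB l x = (l * fst x, smulB l (snd x))"

definition kB_mult ::
  "('k::comm_ring_1 \<Rightarrow> 'b::ring_1 \<Rightarrow> 'b) \<Rightarrow> 'b \<Rightarrow> ('k \<times> 'b) \<Rightarrow> ('k \<times> 'b) \<Rightarrow> ('k \<times> 'b)" where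
  "kB_mult smulB e x y =
     (fst x * fst y, smulB (fst x) (snd y) + smulB (fst y) (snd x) + snd x * e * snd y)"

definition kB_one :: "('k::comm_ring_1 \<times> 'b::ring_1)" where
  "kB_one = (1, 0)"

definition Delta ::
  "('k::comm_ring_1 \<Rightarrow> 'a::ring_1 \<Rightarrow> 'a) \<Rightarrow> ('b::ring_1 \<Rightarrow> 'm \<Rightarrow> 'm) \<Rightarrow> ('m \<Rightarrow> 'a) \<Rightarrow> ('a \<Rightarrow> 'm)
   \<Rightarrow> ('k \<times> 'b) \<Rightarrow> 'a" where
  "Delta smulA rho r c x = smulA (fst x) 1 + r (rho (snd x) (c 1))"

definition unital_alg_hom_kB ::
  "('k::comm_ring_1 \<Rightarrow> 'b::ring_1 \<Rightarrow> 'b) \<Rightarrow> 'b \<Rightarrow> ('k \<Rightarrow> 'a::ring_1 \<Rightarrow> 'a) \<Rightarrow> (('k \<times> 'b) \<Rightarrow> 'a) \<Rightarrow> bool" where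
  "unital_alg_hom_kB smulB e smulA f \<longleftrightarrow>
     (\<forall>x y. f (kB_add x y) = f x + f y) \<and>
     (\<forall>l x. f (kB_smul smulB l x) = smulA l (f x)) \<and>
     (\<forall>x y. f (kB_mult smulB e x y) = f x * f y) \<and>
     f kB_one = 1"

end

theory Submission
  imports Defs
begin

text \<open>Since \<open>c\<close> is A-linear,
  \<open>c(a) = c(1) a\<close>, so \<open>\<rho>(e) = c \<circ> r\<close> turns \<open>\<rho>(b e b')(c 1)\<close> into
  \<open>\<rho>(b)(c(1)) \<Delta>(b')\<close>, and A-linearity of \<open>r\<close> and \<open>\<rho>(b)\<close> gives
  \<open>\<Delta>(b e b') = \<Delta>(b) \<Delta>(b')\<close>. The scalar part is handled by \<open>l \<cdot> a = (l 1) a = a (l 1)\<close>.\<close>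

lemma k_algebra_smul_one_mult:
  assumes "k_algebra smul"
  shows "smul l 1 * x = smul l x"
  using assms unfolding k_algebra_def by (metis mult_1)

lemma k_algebra_mult_smul_one:
  assumes "k_algebra smul"
  shows "x * smul l 1 = smul l x"
  using assms unfolding k_algebra_def by (metis mult.right_neutral)

lemma rmod_hom_zero:
  assumes "rmod_hom actM actN f"
  shows "f 0 = 0"
  using assms unfolding rmod_hom_def by (metis add_cancel_right_right add_0)

lemma rmod_hom_from_ring:
  assumes "rmod_hom (*) act f"
  shows "f a = act (f 1) a"
  using assms unfolding rmod_hom_def by (metis mult_1)

lemma endo_alg_hom_zero:
  assumes "endo_alg_hom smulA smulB act rho"
  shows "rho 0 m = 0"
  using assms unfolding endo_alg_hom_def by (metis add_cancel_right_right add_0)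

definition Delta_B :: "('b \<Rightarrow> 'm \<Rightarrow> 'm) \<Rightarrow> ('m \<Rightarrow> 'a) \<Rightarrow> ('a::ring_1 \<Rightarrow> 'm) \<Rightarrow> 'b \<Rightarrow> 'a" where
  "Delta_B rho r c b = r (rho b (c 1))"

lemma Delta_eq: "Delta smulA rho r c x = smulA (fst x) 1 + Delta_B rho r c (snd x)"
  by (simp add: Delta_def Delta_B_def)

context
  fixes smulA :: "'k::comm_ring_1 \<Rightarrow> 'a::ring_1 \<Rightarrow> 'a"
    and smulB :: "'k \<Rightarrow> 'b::ring_1 \<Rightarrow> 'b"
    and act :: "'m::ab_group_add \<Rightarrow> 'a \<Rightarrow> 'm"
    and rho :: "'b \<Rightarrow> 'm \<Rightarrow> 'm"
    and r :: "'m \<Rightarrow> 'a" and c :: "'a \<Rightarrow> 'm"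
  assumes rho: "endo_alg_hom smulA smulB act rho"
    and r: "rmod_hom act (*) r"
begin

lemma Delta_B_add: "Delta_B rho r c (b + b') = Delta_B rho r c b + Delta_B rho r c b'"
  using rho r unfolding endo_alg_hom_def rmod_hom_def Delta_B_def by simp

lemma Delta_B_smul:
  assumes "k_algebra smulA"
  shows "Delta_B rho r c (smulB l b) = smulA l (Delta_B rho r c b)"
proof -
  have "Delta_B rho r c (smulB l b) = Delta_B rho r c b * smulA l 1"
    using rho r unfolding endo_alg_hom_def rmod_hom_def Delta_B_def by simp
  then show ?thesis
    using assms by (simp add: k_algebra_mult_smul_one)
qed

lemma Delta_B_zero: "Delta_B rho r c 0 = 0"
  using endo_alg_hom_zero[OF rho] rmod_hom_zero[OF r] by (simp add: Delta_B_def)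

lemma Delta_B_mult:
  assumes c: "rmod_hom (*) act c" and e: "rho e = c \<circ> r"
  shows "Delta_B rho r c (b * e * b') = Delta_B rho r c b * Delta_B rho r c b'"
proof -
  have "Delta_B rho r c (b * e * b') = r (rho b (c (Delta_B rho r c b')))"
    using rho e unfolding endo_alg_hom_def Delta_B_def by simp
  also have "c (Delta_B rho r c b') = act (c 1) (Delta_B rho r c b')"
    by (rule rmod_hom_from_ring[OF c])
  finally show ?thesis
    using rho r unfolding endo_alg_hom_def rmod_hom_def Delta_B_def by simp
qed

context
  assumes smulA: "k_algebra smulA"
begin

lemma Delta_add: "Delta smulA rho r c (kB_add x y) = Delta smulA rho r c x + Delta smulA rho r c y"
  using smulA unfolding k_algebra_def by (simp add: Delta_eq kB_add_def Delta_B_add add_ac)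

lemma Delta_smul: "Delta smulA rho r c (kB_smul smulB l x) = smulA l (Delta smulA rho r c x)"
  using smulA unfolding k_algebra_def by (simp add: Delta_eq kB_smul_def Delta_B_smul[OF smulA])

lemma Delta_one: "Delta smulA rho r c kB_one = 1"
  using smulA unfolding k_algebra_def by (simp add: Delta_eq kB_one_def Delta_B_zero)

lemma Delta_mult:
  assumes "rmod_hom (*) act c" and "rho e = c \<circ> r"
  shows "Delta smulA rho r c (kB_mult smulB e x y) = Delta smulA rho r c x * Delta smulA rho r c y"
proof -
  obtain l b l' b' where xy: "x = (l, b)" "y = (l', b')" by fastforce
  let ?D = "Delta_B rho r c"
  have "smulA (l * l') 1 + ?D (smulB l b' + smulB l' b + b * e * b')
      = smulA l (smulA l' 1) + smulA l (?D b') + smulA l' (?D b) + ?D b * ?D b'"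
    using smulA unfolding k_algebra_def
    by (simp add: Delta_B_add Delta_B_smul[OF smulA] Delta_B_mult[OF assms])
  also have "\<dots> = smulA l 1 * smulA l' 1 + smulA l 1 * ?D b' + ?D b * smulA l' 1 + ?D b * ?D b'"
    by (simp only: k_algebra_smul_one_mult[OF smulA, of l]
        k_algebra_mult_smul_one[OF smulA, of "?D b" l'])
  also have "\<dots> = (smulA l 1 + ?D b) * (smulA l' 1 + ?D b')"
    by (simp add: algebra_simps)
  finally show ?thesis
    by (simp add: Delta_eq kB_mult_def xy)
qed

end

end

theorem mainTheorem15:
  fixes smulA :: "'k::comm_ring_1 \<Rightarrow> 'a::ring_1 \<Rightarrow> 'a"
    and smulB :: "'k \<Rightarrow> 'b::ring_1 \<Rightarrow> 'b"
    and act :: "'m::ab_group_add \<Rightarrow> 'a \<Rightarrow> 'm"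
    and rho :: "'b \<Rightarrow> 'm \<Rightarrow> 'm"
    and e :: 'b and r :: "'m \<Rightarrow> 'a" and c :: "'a \<Rightarrow> 'm"
  assumes "Q_algebra_ring TYPE('k)"
    and "k_algebra smulA" and "k_algebra smulB"
    and "right_module act"
    and "endo_alg_hom smulA smulB act rho"
    and "rmod_hom act (*) r"
    and "rmod_hom (*) act c"
    and "rho e = c \<circ> r"
  shows "unital_alg_hom_kB smulB e smulA (Delta smulA rho r c)"
  unfolding unital_alg_hom_kB_def
  using Delta_add[OF assms(5,6,2)] Delta_smul[OF assms(5,6,2)]
    Delta_mult[OF assms(5,6,2,7,8)] Delta_one[OF assms(5,6,2)]
  by blast

end
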